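(* Let $m,n\ge1$ and let $\lambda\subseteq\nu\subseteq(n-1)^{m-1}$ be partitions. For $X\in\mathrm{PASM}(\nu/\lambda,m,n)$ let $c_{ij}=\sum_{i'\le i,\,j'\le j}X_{i'j'}$ and let $\Psi(X)$ be the function $g_X$ on $P(\nu/\lambda)$ given by $g_X(i,j)=c_{ij}$. Then $\Psi(X)$ lies in the order polytope $\mathcal{O}(P(\nu/\lambda))$ for every $X\in\mathrm{PASM}(\nu/\lambda,m,n)$.
   Context: A partition $\mu=(\mu_1\ge\mu_2\ge\cdots)$ is a weakly decreasing sequence of nonnegative integers with finitely many nonzero terms, identified with the set of positions $\{(i,j):i\ge1,1\le j\le\mu_i\}$; $\mu\subseteq\nu$ means $\mu_i\le\nu_i$ for all $i$, and $\mu\subseteq a^b$ means $\mu$ has at most $b$ positive parts and $\mu_1\le a$. For $\mu\subseteq(n-1)^{m-1}$, the $m\times n$ matrix $M^\mu$ has entries $M^\mu_{1,\mu_1+1}=1$; for each $1\le k\le m-1$ with $\mu_k>\mu_{k+1}$, $M^\mu_{k+1,\mu_{k+1}+1}=1$ and $M^\mu_{k+1,\mu_k+1}=-1$; all other entries $0$. $\mathrm{PASM}(\nu/\lambda,m,n)$ is the convex hull in $\mathbb{R}^{mn}$ of $\{M^\mu:\lambda\subseteq\mu\subseteq\nu\}$. $P(\nu/\lambda)$ is the poset whose elements are the positions $(i,j)$ in $\nu$ but not in $\lambda$, ordered by $(i,j)\le(i',j')$ iff $i\le i'$ and $j\le j'$. For a finite poset $P$, the order polytope $\mathcal{O}(P)$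 is the set of functions $f:P\to\mathbb{R}$ with $0\le f(p)\le1$ for all $p$ and $f(p)\le f(q)$ whenever $p\le q$. *)

theory Defs
  imports "HOL-Analysis.Analysis"
begin

text \<open>Partitions are sequences mu :: nat => nat indexed from 1 (mu 1 is the largest part);
  the unused value mu 0 is normalised to 0.\<close>
definition is_partition :: "(nat \<Rightarrow> nat) \<Rightarrow> bool" where
  "is_partition mu \<longleftrightarrow> mu 0 = 0 \<and> (\<forall>i\<ge>1. mu (Suc i) \<le> mu i) \<and> finite {i. mu i \<noteq> 0}"

definition part_le :: "(nat \<Rightarrow> nat) \<Rightarrow> (nat \<Rightarrow> nat) \<Rightarrow> bool" where
  "part_le mu nu \<longleftrightarrow> (\<forall>i. mu i \<le> nu i)"

text \<open>mu contained in the rectangle a^b: at most b positive parts and mu_1 <= a.\<close>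
definition in_rect :: "(nat \<Rightarrow> nat) \<Rightarrow> nat \<Rightarrow> nat \<Rightarrow> bool" where
  "in_rect mu a b \<longleftrightarrow> mu 1 \<le> a \<and> (\<forall>i>b. mu i = 0)"

text \<open>Matrices are functions on positions (row, column), rows 1..m, columns 1..n,
  all other entries 0.  The matrix M^mu:\<close>
definition Mmat :: "nat \<Rightarrow> (nat \<Rightarrow> nat) \<Rightarrow> nat \<times> nat \<Rightarrow> real" where
  "Mmat m mu = (\<lambda>(r, c).
     if r = 1 \<and> c = mu 1 + 1 then 1
     else if 2 \<le> r \<and> r \<le> m \<and> mu (r - 1) > mu r \<and> c = mu r + 1 then 1
     else if 2 \<le> r \<and> r \<le> m \<and> mu (r - 1) > mu r \<and> c = mu (r - 1) + 1 then -1
     else 0)"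

text \<open>Convexity for sets of real-valued functions (pointwise linear structure),
  so that "fun_convex hull S" is the convex hull.\<close>
definition fun_convex :: "('a \<Rightarrow> real) set \<Rightarrow> bool" where
  "fun_convex S \<longleftrightarrow> (\<forall>x\<in>S. \<forall>y\<in>S. \<forall>u::real. 0 \<le> u \<and> u \<le> 1 \<longrightarrow>
      (\<lambda>p. u * x p + (1 - u) * y p) \<in> S)"

definition PASM :: "(nat \<Rightarrow> nat) \<Rightarrow> (nat \<Rightarrow> nat) \<Rightarrow> nat \<Rightarrow> nat \<Rightarrow> (nat \<times> nat \<Rightarrow> real) set" where
  "PASM nu lam m n = fun_convex hull
     {Mmat m mu | mu. is_partition mu \<and> part_le lam mu \<and> part_le mu nu}"

definition skew_cells :: "(nat \<Rightarrow> nat) \<Rightarrow> (nat \<Rightarrow> nat) \<Rightarrow> (nat \<times> nat) set" where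
  "skew_cells nu lam = {(i, j). 1 \<le> i \<and> 1 \<le> j \<and> j \<le> nu i \<and> \<not> j \<le> lam i}"

definition cell_le :: "nat \<times> nat \<Rightarrow> nat \<times> nat \<Rightarrow> bool" where
  "cell_le p q \<longleftrightarrow> fst p \<le> fst q \<and> snd p \<le> snd q"

text \<open>Order polytope of the poset (P, le): functions with 0 <= f <= 1 on P, order preserving.
  Only the values on P matter.\<close>
definition order_polytope :: "'a set \<Rightarrow> ('a \<Rightarrow> 'a \<Rightarrow> bool) \<Rightarrow> ('a \<Rightarrow> real) set" where
  "order_polytope P le = {f. (\<forall>p\<in>P. 0 \<le> f p \<and> f p \<le> 1) \<and>
      (\<forall>p\<in>P. \<forall>q\<in>P. le p q \<longrightarrow> f p \<le> f q)}"

definition Psi :: "(nat \<times> nat \<Rightarrow> real) \<Rightarrow> nat \<times> nat \<Rightarrow> real" where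
  "Psi X = (\<lambda>(i, j). \<Sum>i'\<in>{1..i}. \<Sum>j'\<in>{1..j}. X (i', j'))"

end

theory Submission
  imports Defs
begin

text \<open>Psi is linear and the order polytope is convex, so it suffices to check the vertices
  M^mu of the PASM. For these the corner sums telescope down the rows:
  Psi (M^mu) (i, j) is 1 if mu i < j and 0 otherwise. As mu is weakly decreasing, this
  0/1 function is order preserving.\<close>

lemma fun_convex_order_polytope: "fun_convex (order_polytope P le)"
  unfolding fun_convex_def
proof (intro ballI allI impI)
  fix f g and u :: real
  assume f: "f \<in> order_polytope P le" and g: "g \<in> order_polytope P le" and u: "0 \<le> u \<and> u \<le> 1"
  have bounds: "0 \<le> u * a + (1 - u) * b \<and> u * a + (1 - u) * b \<le> 1"
    if "0 \<le> a" "a \<le> 1" "0 \<le> b" "b \<le> 1" for a b :: real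
    using that u by (simp add: convex_bound_le)
  have mono: "u * a + (1 - u) * b \<le> u * a' + (1 - u) * b'"
    if "a \<le> a'" "b \<le> b'" for a b a' b' :: real
    using that u by (intro add_mono mult_left_mono) auto
  show "(\<lambda>p. u * f p + (1 - u) * g p) \<in> order_polytope P le"
    unfolding order_polytope_def mem_Collect_eq
  proof (rule conjI; intro ballI impI)
    fix p assume "p \<in> P"
    with f g show "0 \<le> u * f p + (1 - u) * g p \<and> u * f p + (1 - u) * g p \<le> 1"
      by (intro bounds) (auto simp: order_polytope_def)
  next
    fix p q assume "p \<in> P" "q \<in> P" "le p q"
    with f g show "u * f p + (1 - u) * g p \<le> u * f q + (1 - u) * g q"
      by (intro mono) (auto simp: order_polytope_def)
  qed
qed

lemma Psi_convex_combination:
  "Psi (\<lambda>p. u * X p + (1 - u) * Y p) = (\<lambda>q. u * Psi X q + (1 - u) * Psi Y q)"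
  unfolding Psi_def by (auto simp: sum.distrib sum_distrib_left)

lemma fun_convex_vimage_Psi:
  assumes "fun_convex S"
  shows "fun_convex {X. Psi X \<in> S}"
  using assms unfolding fun_convex_def by (simp add: Psi_convex_combination)

lemma is_partition_antimono:
  assumes "is_partition mu" "1 \<le> i" "i \<le> i'"
  shows "mu i' \<le> mu i"
  using assms(3)
proof (induction i' rule: dec_induct)
  case (step k)
  have "mu (Suc k) \<le> mu k"
    using assms(1,2) step.hyps(1) unfolding is_partition_def by auto
  with step.IH show ?case by linarith
qed simp

lemma sum_Mmat_first_row: "(\<Sum>c\<in>{1..j}. Mmat m mu (1, c)) = of_bool (mu 1 < j)"
proof -
  have "Mmat m mu (1, c) = of_bool (c = mu 1 + 1)" for c
    by (simp add: Mmat_def)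
  then show ?thesis
    by (simp add: sum.delta' Suc_le_eq)
qed

lemma sum_Mmat_row:
  assumes "2 \<le> r" "r \<le> m" "mu r \<le> mu (r - 1)"
  shows "(\<Sum>c\<in>{1..j}. Mmat m mu (r, c)) = of_bool (mu r < j) - of_bool (mu (r - 1) < j)"
proof (cases "mu r < mu (r - 1)")
  case True
  then have "(\<Sum>c\<in>{1..j}. Mmat m mu (r, c))
      = (\<Sum>c\<in>{1..j}. of_bool (c = mu r + 1) - of_bool (c = mu (r - 1) + 1))"
    using assms(1,2) by (intro sum.cong) (auto simp: Mmat_def)
  then show ?thesis
    by (simp add: sum_subtractf sum.delta' Suc_le_eq)
next
  case False
  with assms show ?thesis by (simp add: Mmat_def)
qed

lemma Psi_Mmat:
  assumes "is_partition mu" "1 \<le> i" "i \<le> m"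
  shows "Psi (Mmat m mu) (i, j) = of_bool (mu i < j)"
  using assms(2,3)
proof (induction i rule: dec_induct)
  case base
  have "Psi (Mmat m mu) (1, j) = (\<Sum>c\<in>{1..j}. Mmat m mu (1, c))"
    unfolding Psi_def by simp
  then show ?case
    by (simp only: sum_Mmat_first_row)
next
  case (step k)
  have "mu (Suc k) \<le> mu k"
    using is_partition_antimono[OF assms(1) step.hyps(1)] by simp
  then have "(\<Sum>c\<in>{1..j}. Mmat m mu (Suc k, c)) = of_bool (mu (Suc k) < j) - of_bool (mu k < j)"
    using sum_Mmat_row[of "Suc k" m mu j] step.hyps(1) step.prems by simp
  moreover have "Psi (Mmat m mu) (Suc k, j)
      = Psi (Mmat m mu) (k, j) + (\<Sum>c\<in>{1..j}. Mmat m mu (Suc k, c))"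
    by (simp add: Psi_def)
  ultimately show ?case
    using step.IH step.prems by simp
qed

lemma Psi_Mmat_in_order_polytope:
  assumes "is_partition mu" and rows: "\<And>i j. (i, j) \<in> P \<Longrightarrow> 1 \<le> i \<and> i \<le> m"
  shows "Psi (Mmat m mu) \<in> order_polytope P cell_le"
proof -
  have bounds: "0 \<le> Psi (Mmat m mu) p \<and> Psi (Mmat m mu) p \<le> 1" if "p \<in> P" for p
    using that rows Psi_Mmat[OF assms(1)] by (cases p) auto
  have mono: "Psi (Mmat m mu) (i, j) \<le> Psi (Mmat m mu) (i', j')"
    if "(i, j) \<in> P" "(i', j') \<in> P" "cell_le (i, j) (i', j')" for i j i' j'
  proof -
    have "mu i' \<le> mu i"
      using that rows is_partition_antimono[OF assms(1)] unfolding cell_le_def by auto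
    then show ?thesis
      using that rows Psi_Mmat[OF assms(1)] unfolding cell_le_def by auto
  qed
  show ?thesis
    unfolding order_polytope_def using bounds mono by auto
qed

lemma skew_cells_rows:
  assumes "in_rect nu a b" "(i, j) \<in> skew_cells nu lam"
  shows "1 \<le> i \<and> i \<le> b"
proof -
  from assms(2) have "1 \<le> i" "nu i \<noteq> 0"
    unfolding skew_cells_def by auto
  with assms(1) show ?thesis
    unfolding in_rect_def by (meson not_le)
qed

theorem mainTheorem4:
  fixes m n :: nat and lam nu :: "nat \<Rightarrow> nat" and X :: "nat \<times> nat \<Rightarrow> real"
  assumes "1 \<le> m" and "1 \<le> n"
    and "is_partition lam" and "is_partition nu"
    and "part_le lam nu" and "in_rect nu (n - 1) (m - 1)"
    and "X \<in> PASM nu lam m n"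
  shows "Psi X \<in> order_polytope (skew_cells nu lam) cell_le"
proof -
  let ?P = "skew_cells nu lam"
  have rows: "1 \<le> i \<and> i \<le> m" if "(i, j) \<in> ?P" for i j
    using skew_cells_rows[OF assms(6) that] by (meson diff_le_self le_trans)
  have "{Mmat m mu | mu. is_partition mu \<and> part_le lam mu \<and> part_le mu nu}
      \<subseteq> {X. Psi X \<in> order_polytope ?P cell_le}"
    using Psi_Mmat_in_order_polytope[OF _ rows] by auto
  then have "PASM nu lam m n \<subseteq> {X. Psi X \<in> order_polytope ?P cell_le}"
    unfolding PASM_def
    using fun_convex_vimage_Psi[OF fun_convex_order_polytope] by (rule hull_minimal)
  with assms(7) show ?thesis by blast
qed

end
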